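(* For every sufficiently large natural number $n$ and every natural number $\alpha$, there exists a set $B \subseteq \{0,1\}^n$ with $|B| \leq (2n^{13} + n^{12})\cdot 2^{\alpha}$ such that every string $y \in \{0,1\}^n$ is $\alpha$-dependent with some string $x \in B$.
   Context: $C(x)$ denotes the plain Kolmogorov complexity of the binary string $x$ with respect to a fixed universal Turing machine; $C(x \mid y)$ denotes the conditional plain Kolmogorov complexity of $x$ given $y$ with respect to a fixed universal conditional machine. A string $y$ is said to have $\alpha$-dependency with (be $\alpha$-dependent with) a string $x$ if $C(y) - C(y \mid x) \geq \alpha$ or $x = y$. *)

theory Defs
  imports Main
begin

datatype recf = Zero | Succ | Proj nat | Comp recf "recf list" | Prim recf recf | Mu recf

lemma list_all2_mono_pred [mono]:
  "(\<And>x y. P x y \<longrightarrow> Q x y) \<Longrightarrow> list_all2 P xs ys \<longrightarrow> list_all2 Q xs ys"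
  by (simp add: list_all2_mono)

inductive eval :: "recf \<Rightarrow> nat list \<Rightarrow> nat \<Rightarrow> bool" where
  eval_zero: "eval Zero xs 0"
| eval_succ: "eval Succ (x # xs) (Suc x)"
| eval_proj: "i < length xs \<Longrightarrow> eval (Proj i) xs (xs ! i)"
| eval_comp: "list_all2 (\<lambda>g y. eval g xs y) gs ys \<Longrightarrow> eval f ys z \<Longrightarrow> eval (Comp f gs) xs z"
| eval_prim0: "eval f xs z \<Longrightarrow> eval (Prim f g) (0 # xs) z"
| eval_primS: "eval (Prim f g) (n # xs) y \<Longrightarrow> eval g (y # n # xs) z \<Longrightarrow>
               eval (Prim f g) (Suc n # xs) z"
| eval_mu: "eval f (n # xs) 0 \<Longrightarrow> (\<forall>m<n. \<exists>k. k \<noteq> 0 \<and> eval f (m # xs) k) \<Longrightarrow>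
            eval (Mu f) xs n"

text \<open>Bijective encoding of binary strings as natural numbers.\<close>
fun enc :: "bool list \<Rightarrow> nat" where
  "enc [] = 0"
| "enc (b # bs) = 2 * enc bs + (if b then 2 else 1)"

definition computable1 :: "(bool list \<Rightarrow> bool list option) \<Rightarrow> bool" where
  "computable1 F \<longleftrightarrow> (\<exists>r. \<forall>p z. eval r [enc p] (enc z) \<longleftrightarrow> F p = Some z)"

definition computable2 :: "(bool list \<Rightarrow> bool list \<Rightarrow> bool list option) \<Rightarrow> bool" where
  "computable2 F \<longleftrightarrow> (\<exists>r. \<forall>p y z. eval r [enc p, enc y] (enc z) \<longleftrightarrow> F p y = Some z)"

definition universal1 :: "(bool list \<Rightarrow> bool list option) \<Rightarrow> bool" where
  "universal1 U \<longleftrightarrow> computable1 U \<and>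
     (\<forall>F. computable1 F \<longrightarrow> (\<exists>c::nat. \<forall>p x. F p = Some x \<longrightarrow>
         (\<exists>q. U q = Some x \<and> length q \<le> length p + c)))"

definition universal2 :: "(bool list \<Rightarrow> bool list \<Rightarrow> bool list option) \<Rightarrow> bool" where
  "universal2 V \<longleftrightarrow> computable2 V \<and>
     (\<forall>F. computable2 F \<longrightarrow> (\<exists>c::nat. \<forall>p y x. F p y = Some x \<longrightarrow>
         (\<exists>q. V q y = Some x \<and> length q \<le> length p + c)))"

definition KC :: "(bool list \<Rightarrow> bool list option) \<Rightarrow> bool list \<Rightarrow> nat" where
  "KC U x = (LEAST k. \<exists>p. length p = k \<and> U p = Some x)"

definition KCc :: "(bool list \<Rightarrow> bool list \<Rightarrow> bool list option) \<Rightarrow> bool list \<Rightarrow> bool list \<Rightarrow> nat" where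
  "KCc V x y = (LEAST k. \<exists>p. length p = k \<and> V p y = Some x)"

definition dependent :: "(bool list \<Rightarrow> bool list option) \<Rightarrow> (bool list \<Rightarrow> bool list \<Rightarrow> bool list option)
    \<Rightarrow> nat \<Rightarrow> bool list \<Rightarrow> bool list \<Rightarrow> bool" where
  "dependent U V \<alpha> y x \<longleftrightarrow> int (KC U y) - int (KCc V y x) \<ge> int \<alpha> \<or> x = y"

end

theory Submission
  imports Defs
begin

text \<open>Let \<open>c\<close> be the overhead with which the conditional machine simulates the machine that,
on program \<open>q\<close> and condition \<open>pre 1 0...0\<close>, runs the plain machine on \<open>pre q\<close>; put \<open>t = \<alpha> + c\<close>.
If \<open>C(y) \<ge> t\<close>, split a shortest program for \<open>y\<close> into its first \<open>t\<close> bits \<open>pre\<close> and the rest \<open>q\<close>: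
then \<open>C(y | pre 1 0...0) \<le> C(y) - t + c = C(y) - \<alpha>\<close>. The \<open>2^t\<close> padded prefixes together with
the fewer than \<open>2^t\<close> strings of complexity below \<open>t\<close> form a set of size at most
\<open>2^(\<alpha> + c + 1) \<le> n^12 2^\<alpha>\<close> once \<open>n \<ge> 2^(c + 1)\<close>.\<close>

section \<open>Recursive functions computing total functions\<close>

inductive_cases eval_ZeroE: "eval Zero xs z"
inductive_cases eval_SuccE: "eval Succ xs z"
inductive_cases eval_ProjE: "eval (Proj i) xs z"
inductive_cases eval_CompE: "eval (Comp f gs) xs z"
inductive_cases eval_PrimE: "eval (Prim f g) xs z"

definition computes :: "recf \<Rightarrow> nat \<Rightarrow> (nat list \<Rightarrow> nat) \<Rightarrow> bool" where
  "computes r n f \<longleftrightarrow> (\<forall>xs z. length xs = n \<longrightarrow> (eval r xs z \<longleftrightarrow> z = f xs))"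

lemma computes_cong:
  "computes r n f \<Longrightarrow> (\<And>xs. length xs = n \<Longrightarrow> f xs = g xs) \<Longrightarrow> computes r n g"
  by (simp add: computes_def)

lemma computes_unary_cong:
  "computes r (Suc 0) f \<Longrightarrow> (\<And>a. f [a] = g [a]) \<Longrightarrow> computes r 1 g"
  unfolding computes_def by (metis One_nat_def length_0_conv length_Suc_conv)

lemma computes_binary_cong:
  "computes r (Suc (Suc 0)) f \<Longrightarrow> (\<And>a b. f [a, b] = g [a, b]) \<Longrightarrow> computes r 2 g"
  unfolding computes_def numeral_2_eq_2 by (auto simp: length_Suc_conv)

lemma computes_Zero: "computes Zero n (\<lambda>_. 0)"
  by (auto simp: computes_def intro: eval_zero elim: eval_ZeroE)

lemma computes_Succ: "computes Succ (Suc n) (\<lambda>xs. Suc (hd xs))"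
  by (auto simp: computes_def length_Suc_conv intro: eval_succ elim: eval_SuccE)

lemma computes_Succ1: "computes Succ 1 (\<lambda>xs. Suc (hd xs))"
  using computes_Succ[of 0] by simp

lemma computes_Proj: "i < n \<Longrightarrow> computes (Proj i) n (\<lambda>xs. xs ! i)"
  by (auto simp: computes_def intro: eval_proj elim: eval_ProjE)

lemma list_all2_eval_iff:
  assumes "list_all2 (\<lambda>g h. computes g n h) gs hs" and "length xs = n"
  shows "list_all2 (\<lambda>g y. eval g xs y) gs ys \<longleftrightarrow> ys = map (\<lambda>h. h xs) hs"
  using assms
proof (induction gs hs arbitrary: ys rule: list_all2_induct)
  case Nil
  then show ?case by simp
next
  case (Cons g gs h hs)
  then show ?case by (cases ys) (auto simp: computes_def)
qed

lemma computes_Comp: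
  assumes f: "computes f (length gs) fo" and gs: "list_all2 (\<lambda>g h. computes g n h) gs hs"
  shows "computes (Comp f gs) n (\<lambda>xs. fo (map (\<lambda>h. h xs) hs))"
  unfolding computes_def
proof (intro allI impI)
  fix xs :: "nat list" and z assume n: "length xs = n"
  have "length (map (\<lambda>h. h xs) hs) = length gs"
    using gs by (simp add: list_all2_lengthD)
  then show "eval (Comp f gs) xs z \<longleftrightarrow> z = fo (map (\<lambda>h. h xs) hs)"
    using list_all2_eval_iff[OF gs n] f
    by (auto simp: computes_def intro: eval_comp elim: eval_CompE)
qed

lemma computes_Comp1:
  "computes f 1 fo \<Longrightarrow> computes g n h \<Longrightarrow> computes (Comp f [g]) n (\<lambda>xs. fo [h xs])"
  using computes_Comp[of f "[g]" fo n "[h]"] by simp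

lemma computes_Comp2:
  "computes f 2 fo \<Longrightarrow> computes g1 n h1 \<Longrightarrow> computes g2 n h2 \<Longrightarrow>
   computes (Comp f [g1, g2]) n (\<lambda>xs. fo [h1 xs, h2 xs])"
  using computes_Comp[of f "[g1, g2]" fo n "[h1, h2]"] by (simp add: numeral_2_eq_2)

lemma eval_Comp1_iff:
  "computes g n h \<Longrightarrow> length xs = n \<Longrightarrow> eval (Comp f [g]) xs z \<longleftrightarrow> eval f [h xs] z"
  by (auto simp: computes_def list_all2_Cons1 intro: eval_comp elim!: eval_CompE)

lemma computes_Prim:
  assumes f: "computes f n fo" and g: "computes g (Suc (Suc n)) go"
  shows "computes (Prim f g) (Suc n)
           (\<lambda>xs. rec_nat (fo (tl xs)) (\<lambda>k y. go (y # k # tl xs)) (hd xs))"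
  unfolding computes_def
proof (intro allI impI)
  fix xs :: "nat list" and z assume "length xs = Suc n"
  then obtain m ys where xs: "xs = m # ys" and ys: "length ys = n"
    by (cases xs) auto
  have "\<forall>z. eval (Prim f g) (m # ys) z \<longleftrightarrow> z = rec_nat (fo ys) (\<lambda>k y. go (y # k # ys)) m"
  proof (induction m)
    case 0
    show ?case
      using f ys by (auto simp: computes_def intro: eval_prim0 elim: eval_PrimE)
  next
    case (Suc m)
    show ?case
      using Suc g ys by (auto simp: computes_def intro: eval_primS elim: eval_PrimE)
  qed
  then show "eval (Prim f g) xs z \<longleftrightarrow>
      z = rec_nat (fo (tl xs)) (\<lambda>k y. go (y # k # tl xs)) (hd xs)"
    using xs by simp
qed

definition rec_one :: recf where
  "rec_one = Comp Succ [Zero]"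

lemma computes_rec_one: "computes rec_one n (\<lambda>_. 1)"
  unfolding rec_one_def
  by (rule computes_cong[OF computes_Comp1[OF computes_Succ1 computes_Zero]]) simp

definition rec_add :: recf where
  "rec_add = Prim (Proj 0) (Comp Succ [Proj 0])"

lemma computes_rec_add: "computes rec_add 2 (\<lambda>xs. xs ! 0 + xs ! 1)"
proof -
  have "computes (Comp Succ [Proj 0]) 3 (\<lambda>xs. Suc (xs ! 0))"
    by (rule computes_cong[OF computes_Comp1[OF computes_Succ1 computes_Proj]]) auto
  then have "computes rec_add (Suc (Suc 0))
      (\<lambda>xs. rec_nat (tl xs ! 0) (\<lambda>k y. Suc ((y # k # tl xs) ! 0)) (hd xs))"
    unfolding rec_add_def by (intro computes_Prim computes_Proj) (simp_all add: numeral_3_eq_3)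
  then show ?thesis
    by (rule computes_binary_cong) (induct_tac a, auto)
qed

definition rec_mult :: recf where
  "rec_mult = Prim Zero (Comp rec_add [Proj 0, Proj 2])"

lemma computes_rec_mult: "computes rec_mult 2 (\<lambda>xs. xs ! 0 * xs ! 1)"
proof -
  have "computes (Comp rec_add [Proj 0, Proj 2]) 3 (\<lambda>xs. xs ! 0 + xs ! 2)"
    by (rule computes_cong[OF computes_Comp2[OF computes_rec_add computes_Proj computes_Proj]]) auto
  then have "computes rec_mult (Suc (Suc 0))
      (\<lambda>xs. rec_nat 0 (\<lambda>k y. (y # k # tl xs) ! 0 + (y # k # tl xs) ! 2) (hd xs))"
    unfolding rec_mult_def by (intro computes_Prim computes_Zero) (simp add: numeral_3_eq_3)
  then show ?thesis
    by (rule computes_binary_cong) (induct_tac a, auto)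
qed

definition rec_dec :: recf where
  "rec_dec = Prim Zero (Proj 1)"

lemma computes_rec_dec: "computes rec_dec 1 (\<lambda>xs. xs ! 0 - 1)"
proof -
  have "computes rec_dec (Suc 0) (\<lambda>xs. rec_nat 0 (\<lambda>k y. (y # k # tl xs) ! 1) (hd xs))"
    unfolding rec_dec_def by (intro computes_Prim computes_Zero computes_Proj) simp
  then show ?thesis
    by (rule computes_unary_cong) (case_tac a, auto)
qed

definition rec_diff :: recf where
  "rec_diff = Comp (Prim (Proj 0) (Comp rec_dec [Proj 0])) [Proj 1, Proj 0]"

lemma computes_rec_diff: "computes rec_diff 2 (\<lambda>xs. xs ! 0 - xs ! 1)"
proof -
  have "computes (Comp rec_dec [Proj 0]) 3 (\<lambda>xs. xs ! 0 - 1)"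
    by (rule computes_cong[OF computes_Comp1[OF computes_rec_dec computes_Proj]]) auto
  then have "computes (Prim (Proj 0) (Comp rec_dec [Proj 0])) (Suc (Suc 0))
      (\<lambda>xs. rec_nat (tl xs ! 0) (\<lambda>k y. (y # k # tl xs) ! 0 - 1) (hd xs))"
    by (intro computes_Prim computes_Proj) (simp_all add: numeral_3_eq_3)
  then have "computes (Prim (Proj 0) (Comp rec_dec [Proj 0])) 2 (\<lambda>xs. xs ! 1 - xs ! 0)"
    by (rule computes_binary_cong) (induct_tac a, auto)
  then show ?thesis
    unfolding rec_diff_def
    by (rule computes_cong[OF computes_Comp2[OF _ computes_Proj computes_Proj]]) auto
qed

fun pow2_floor :: "nat \<Rightarrow> nat" where
  "pow2_floor 0 = 1"
| "pow2_floor (Suc v) = (if 2 * pow2_floor v \<le> Suc v then 2 * pow2_floor v else pow2_floor v)"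

lemma pow2_floor_bounds:
  "(\<exists>j. pow2_floor v = 2 ^ j) \<and> pow2_floor v \<le> max 1 v \<and> max 1 v < 2 * pow2_floor v"
proof (induction v)
  case 0
  show ?case by (auto intro: exI[of _ 0])
next
  case (Suc v)
  then obtain j where j: "pow2_floor v = 2 ^ j"
    by blast
  show ?case
  proof (cases "2 * pow2_floor v \<le> Suc v")
    case True
    with Suc j show ?thesis by (auto intro: exI[of _ "Suc j"])
  next
    case False
    with Suc j show ?thesis by auto
  qed
qed

lemma pow2_floor_eq: "2 ^ n \<le> v \<Longrightarrow> v < 2 ^ Suc n \<Longrightarrow> pow2_floor v = 2 ^ n"
proof -
  assume low: "2 ^ n \<le> v" and high: "v < 2 ^ Suc n"
  have "max 1 v = v"
    using low one_le_power[of "2::nat" n] by linarith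
  then obtain j where j: "pow2_floor v = 2 ^ j" "2 ^ j \<le> v" "v < 2 ^ Suc j"
    using pow2_floor_bounds[of v] by force
  have "(2::nat) ^ j < 2 ^ Suc n" "(2::nat) ^ n < 2 ^ Suc j"
    using j low high by linarith+
  then have "j < Suc n" "n < Suc j"
    using power_less_imp_less_exp[of "2::nat" j "Suc n"] power_less_imp_less_exp[of "2::nat" n "Suc j"]
    by linarith+
  then show ?thesis using j by simp
qed

text \<open>\<open>1 - (2a - Suc v)\<close> is the indicator of \<open>2a \<le> Suc v\<close>.\<close>

definition rec_pow2_step :: recf where
  "rec_pow2_step =
  Comp rec_add [Proj 0, Comp rec_mult [Proj 0,
    Comp rec_diff [rec_one, Comp rec_diff [Comp rec_add [Proj 0, Proj 0], Comp Succ [Proj 1]]]]]"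

lemma computes_rec_pow2_step:
  "computes rec_pow2_step 2 (\<lambda>xs. if 2 * xs ! 0 \<le> Suc (xs ! 1) then 2 * xs ! 0 else xs ! 0)"
proof -
  have double: "computes (Comp rec_add [Proj 0, Proj 0]) 2 (\<lambda>xs. xs ! 0 + xs ! 0)"
    by (rule computes_cong[OF computes_Comp2[OF computes_rec_add computes_Proj computes_Proj]]) auto
  have succ: "computes (Comp Succ [Proj 1]) 2 (\<lambda>xs. Suc (xs ! 1))"
    by (rule computes_cong[OF computes_Comp1[OF computes_Succ1 computes_Proj]]) auto
  have excess: "computes (Comp rec_diff [Comp rec_add [Proj 0, Proj 0], Comp Succ [Proj 1]]) 2
      (\<lambda>xs. (xs ! 0 + xs ! 0) - Suc (xs ! 1))"
    by (rule computes_cong[OF computes_Comp2[OF computes_rec_diff double succ]]) auto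
  have test: "computes (Comp rec_diff [rec_one,
        Comp rec_diff [Comp rec_add [Proj 0, Proj 0], Comp Succ [Proj 1]]]) 2
      (\<lambda>xs. 1 - ((xs ! 0 + xs ! 0) - Suc (xs ! 1)))"
    by (rule computes_cong[OF computes_Comp2[OF computes_rec_diff computes_rec_one excess]]) auto
  have scaled: "computes (Comp rec_mult [Proj 0, Comp rec_diff [rec_one,
        Comp rec_diff [Comp rec_add [Proj 0, Proj 0], Comp Succ [Proj 1]]]]) 2
      (\<lambda>xs. xs ! 0 * (1 - ((xs ! 0 + xs ! 0) - Suc (xs ! 1))))"
    by (rule computes_cong[OF computes_Comp2[OF computes_rec_mult computes_Proj test]]) auto
  have "a + a * (1 - (a + a - Suc v)) = (if 2 * a \<le> Suc v then 2 * a else a)" for a v :: nat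
    by simp
  then show ?thesis
    unfolding rec_pow2_step_def
    by (intro computes_cong[OF computes_Comp2[OF computes_rec_add computes_Proj scaled]]) simp_all
qed

definition rec_pow2_floor :: recf where
  "rec_pow2_floor = Prim rec_one rec_pow2_step"

lemma computes_rec_pow2_floor: "computes rec_pow2_floor 1 (\<lambda>xs. pow2_floor (xs ! 0))"
proof -
  have step: "computes rec_pow2_step (Suc (Suc 0))
      (\<lambda>xs. if 2 * xs ! 0 \<le> Suc (xs ! 1) then 2 * xs ! 0 else xs ! 0)"
    using computes_rec_pow2_step by (simp add: numeral_2_eq_2)
  have "computes rec_pow2_floor (Suc 0) (\<lambda>xs. rec_nat 1 (\<lambda>k y.
      if 2 * (y # k # tl xs) ! 0 \<le> Suc ((y # k # tl xs) ! 1) then 2 * (y # k # tl xs) ! 0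
      else (y # k # tl xs) ! 0) (hd xs))"
    unfolding rec_pow2_floor_def
    by (rule computes_Prim[OF computes_rec_one step])
  then show ?thesis
    by (rule computes_unary_cong) (induct_tac a, auto)
qed

section \<open>Removing a padding marker from the code of a string\<close>

lemma enc_append: "enc (a @ b) = enc a + 2 ^ length a * enc b"
  by (induction a) auto

lemma enc_bounds: "2 ^ length s \<le> enc s + 1 \<and> enc s + 2 \<le> 2 ^ Suc (length s)"
  by (induction s) auto

lemma enc_replicate_False: "enc (replicate k False) + 1 = 2 ^ k"
  by (induction k) auto

lemma inj_enc: "inj enc"
proof -
  have "enc a = enc b \<Longrightarrow> a = b" for a b
  proof (induction a arbitrary: b)
    case Nil
    then show ?case by (cases b) (auto split: if_splits)
  next
    case (Cons x a)
    then obtain y b' where "b = y # b'"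
      by (cases b) (auto split: if_splits)
    with Cons show ?case by (cases x; cases y) (auto, presburger+)
  qed
  then show ?thesis by (auto intro: injI)
qed

lemma surj_enc: "surj enc"
proof -
  have "\<exists>s. enc s = m" for m
  proof (induction m rule: less_induct)
    case (less m)
    show ?case
    proof (cases m)
      case 0
      then show ?thesis by (intro exI[of _ "[]"]) simp
    next
      case (Suc m')
      then obtain s where "enc s = m' div 2"
        using less.IH by fastforce
      then show ?thesis
        using Suc by (intro exI[of _ "odd m' # s"]) auto
    qed
  qed
  then show ?thesis by (metis surjI)
qed

text \<open>Since \<open>enc\<close> is little-endian, the marker of \<open>pre @ True # replicate k False\<close> is the leading
power of two of its code, and \<open>Suc (enc pre)\<close> has leading power \<open>2 ^ length pre\<close>.\<close>

definition unpad_append :: "nat \<Rightarrow> nat \<Rightarrow> nat" where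
  "unpad_append q x = (x - pow2_floor x) + pow2_floor (Suc (x - pow2_floor x)) * q"

lemma unpad_append_enc:
  "unpad_append (enc q) (enc (pre @ True # replicate k False)) = enc (pre @ q)"
proof -
  let ?t = "length pre"
  have "2 * enc (replicate k False) + 2 = 2 * 2 ^ k"
    using enc_replicate_False[of k] by simp
  then have padded: "enc (pre @ True # replicate k False) = enc pre + 2 ^ (?t + k + 1)"
    by (simp add: enc_append power_add mult_ac)
  have pre: "2 ^ ?t \<le> enc pre + 1" "enc pre + 2 \<le> 2 ^ Suc ?t"
    using enc_bounds[of pre] by auto
  moreover have "(2::nat) ^ Suc ?t \<le> 2 ^ (?t + k + 1)"
    by (rule power_increasing) auto
  ultimately have "enc pre < 2 ^ (?t + k + 1)"
    by linarith
  then have "pow2_floor (enc pre + 2 ^ (?t + k + 1)) = 2 ^ (?t + k + 1)"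
    by (intro pow2_floor_eq) auto
  moreover have "pow2_floor (Suc (enc pre)) = 2 ^ ?t"
    using pre by (intro pow2_floor_eq) auto
  ultimately show ?thesis
    unfolding unpad_append_def padded by (simp add: enc_append)
qed

definition rec_unpad_append :: recf where
  "rec_unpad_append =
  (let a = Comp rec_diff [Proj 1, Comp rec_pow2_floor [Proj 1]]
   in Comp rec_add [a, Comp rec_mult [Comp rec_pow2_floor [Comp Succ [a]], Proj 0]])"

lemma computes_rec_unpad_append:
  "computes rec_unpad_append 2 (\<lambda>xs. unpad_append (xs ! 0) (xs ! 1))"
proof -
  let ?a = "Comp rec_diff [Proj 1, Comp rec_pow2_floor [Proj 1]]"
  have floor: "computes (Comp rec_pow2_floor [Proj 1]) 2 (\<lambda>xs. pow2_floor (xs ! 1))"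
    by (rule computes_cong[OF computes_Comp1[OF computes_rec_pow2_floor computes_Proj]]) auto
  have a: "computes ?a 2 (\<lambda>xs. xs ! 1 - pow2_floor (xs ! 1))"
    by (rule computes_cong[OF computes_Comp2[OF computes_rec_diff computes_Proj floor]]) auto
  then have "computes (Comp Succ [?a]) 2 (\<lambda>xs. Suc (xs ! 1 - pow2_floor (xs ! 1)))"
    by (rule computes_cong[OF computes_Comp1[OF computes_Succ1]]) auto
  then have "computes (Comp rec_pow2_floor [Comp Succ [?a]]) 2
      (\<lambda>xs. pow2_floor (Suc (xs ! 1 - pow2_floor (xs ! 1))))"
    by (rule computes_cong[OF computes_Comp1[OF computes_rec_pow2_floor]]) auto
  then have "computes (Comp rec_mult [Comp rec_pow2_floor [Comp Succ [?a]], Proj 0]) 2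
      (\<lambda>xs. pow2_floor (Suc (xs ! 1 - pow2_floor (xs ! 1))) * xs ! 0)"
    by (rule computes_cong[OF computes_Comp2[OF computes_rec_mult _ computes_Proj]]) auto
  with a show ?thesis
    unfolding rec_unpad_append_def Let_def
    by (rule computes_cong[OF computes_Comp2[OF computes_rec_add]]) (auto simp: unpad_append_def)
qed

definition prefix_machine ::
    "(bool list \<Rightarrow> bool list option) \<Rightarrow> bool list \<Rightarrow> bool list \<Rightarrow> bool list option" where
  "prefix_machine U q x = U (inv enc (unpad_append (enc q) (enc x)))"

lemma prefix_machine_padded:
  "prefix_machine U q (pre @ True # replicate k False) = U (pre @ q)"
  unfolding prefix_machine_def unpad_append_enc by (simp add: inj_enc)

lemma computable2_prefix_machine:
  assumes "computable1 U"
  shows "computable2 (prefix_machine U)"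
proof -
  obtain r where r: "\<And>p z. eval r [enc p] (enc z) \<longleftrightarrow> U p = Some z"
    using assms by (auto simp: computable1_def)
  have "eval (Comp r [rec_unpad_append]) [enc p, enc y] (enc z) \<longleftrightarrow> prefix_machine U p y = Some z"
    for p y z
    using eval_Comp1_iff[OF computes_rec_unpad_append, of "[enc p, enc y]" r]
      r[of "inv enc (unpad_append (enc p) (enc y))"]
    by (simp add: prefix_machine_def surj_f_inv_f[OF surj_enc])
  then show ?thesis
    unfolding computable2_def by blast
qed

lemma universal1_produces_all:
  assumes "universal1 U"
  shows "\<exists>p. U p = Some x"
proof -
  have "computable1 Some"
    unfolding computable1_def
    by (rule exI[of _ "Proj 0"])
      (auto simp: inj_eq[OF inj_enc] intro: eval_proj[of 0 "[_]", simplified] elim: eval_ProjE)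
  then show ?thesis
    using assms unfolding universal1_def by blast
qed

lemma KC_attained:
  assumes "universal1 U"
  obtains p where "length p = KC U y" and "U p = Some y"
proof -
  have "\<exists>k p. length p = k \<and> U p = Some y"
    using universal1_produces_all[OF assms] by blast
  from LeastI_ex[OF this] obtain p where "length p = KC U y" "U p = Some y"
    unfolding KC_def by blast
  then show ?thesis
    by (rule that)
qed

definition simulates ::
    "(bool list \<Rightarrow> bool list \<Rightarrow> bool list option) \<Rightarrow> (bool list \<Rightarrow> bool list \<Rightarrow> bool list option)
      \<Rightarrow> nat \<Rightarrow> bool" where
  "simulates V M c \<longleftrightarrow>
     (\<forall>p x z. M p x = Some z \<longrightarrow> (\<exists>q. V q x = Some z \<and> length q \<le> length p + c))"

lemma KCc_le: "V q x = Some y \<Longrightarrow> KCc V y x \<le> length q"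
  unfolding KCc_def by (rule Least_le) blast

lemma card_strings_length: "card {x :: bool list. length x = n} = 2 ^ n"
  using card_lists_length_eq[of "UNIV :: bool set" n] by simp

lemma finite_lists_shorter: "finite {p :: bool list. length p < t}"
  using finite_lists_length_le[of "UNIV :: bool set" t]
  by (rule finite_subset[rotated]) auto

lemma card_lists_shorter: "card {p :: bool list. length p < t} < 2 ^ t"
proof (induction t)
  case 0
  show ?case by simp
next
  case (Suc t)
  have "{p :: bool list. length p < Suc t} = {p. length p < t} \<union> {p. length p = t}"
    by auto
  then have "card {p :: bool list. length p < Suc t} \<le> card {p :: bool list. length p < t} + 2 ^ t"
    using card_Un_le[of "{p :: bool list. length p < t}" "{p. length p = t}"] card_strings_length[of t]
    by simp
  with Suc show ?case by simp
qed

lemma KC_less_subset: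
  assumes "universal1 U"
  shows "{y. KC U y < t} \<subseteq> (\<lambda>p. the (U p)) ` {p. length p < t}"
proof
  fix y assume "y \<in> {y. KC U y < t}"
  moreover obtain p where "length p = KC U y" "U p = Some y"
    using KC_attained[OF assms] .
  ultimately show "y \<in> (\<lambda>p. the (U p)) ` {p. length p < t}"
    by (intro image_eqI[of _ _ p]) auto
qed

lemma card_KC_less:
  assumes "universal1 U"
  shows "card {y \<in> A. KC U y < t} < 2 ^ t"
proof -
  have "card {y \<in> A. KC U y < t} \<le> card ((\<lambda>p. the (U p)) ` {p. length p < t})"
    using KC_less_subset[OF assms] finite_lists_shorter by (intro card_mono) auto
  also have "\<dots> \<le> card {p :: bool list. length p < t}"
    by (rule card_image_le[OF finite_lists_shorter])
  also have "\<dots> < 2 ^ t"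
    by (rule card_lists_shorter)
  finally show ?thesis .
qed

section \<open>Covering sets of strings\<close>

lemma dependent_on_padded_prefix:
  assumes U: "universal1 U"
    and c: "simulates V (prefix_machine U) c"
    and complex: "\<alpha> + c \<le> KC U y"
  shows "\<exists>pre. length pre = \<alpha> + c \<and> dependent U V \<alpha> y (pre @ True # replicate k False)"
proof -
  obtain p where p: "length p = KC U y" "U p = Some y"
    using KC_attained[OF U] .
  define pre where "pre = take (\<alpha> + c) p"
  define q where "q = drop (\<alpha> + c) p"
  have "prefix_machine U q (pre @ True # replicate k False) = Some y"
    unfolding prefix_machine_padded pre_def q_def using p by simp
  then obtain q' where "V q' (pre @ True # replicate k False) = Some y" "length q' \<le> length q + c"
    using c unfolding simulates_def by blast
  then have "KCc V y (pre @ True # replicate k False) + \<alpha> \<le> KC U y"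
    using KCc_le complex p unfolding q_def by fastforce
  moreover have "length pre = \<alpha> + c"
    unfolding pre_def using p complex by simp
  ultimately show ?thesis
    unfolding dependent_def by auto
qed

lemma padded_prefix_cover:
  assumes U: "universal1 U"
    and c: "simulates V (prefix_machine U) c"
    and n: "\<alpha> + c < n"
  shows "\<exists>B. B \<subseteq> {x. length x = n} \<and> card B \<le> 2 ^ (\<alpha> + c + 1) \<and>
           (\<forall>y. length y = n \<longrightarrow> (\<exists>x\<in>B. dependent U V \<alpha> y x))"
proof -
  define t where "t = \<alpha> + c"
  define k where "k = n - t - 1"
  define padded where "padded = (\<lambda>pre. pre @ True # replicate k False) ` {pre. length pre = t}"
  define simple where "simple = {y. length y = n \<and> KC U y < t}"
  have "padded \<subseteq> {x. length x = n}"
    using n unfolding padded_def k_def t_def by auto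
  moreover have "card padded \<le> 2 ^ t"
    using card_image_le[of "{pre :: bool list. length pre = t}"] card_strings_length[of t]
      finite_lists_length_eq[of "UNIV :: bool set" t]
    unfolding padded_def by simp
  moreover have "card simple < 2 ^ t"
    unfolding simple_def using card_KC_less[OF U, of "{y. length y = n}"] by simp
  moreover have "\<exists>x\<in>padded \<union> simple. dependent U V \<alpha> y x" if "length y = n" for y
  proof (cases "KC U y < t")
    case True
    with that have "y \<in> simple" unfolding simple_def by simp
    then show ?thesis by (auto simp: dependent_def)
  next
    case False
    then show ?thesis
      using dependent_on_padded_prefix[OF U c, of \<alpha> y k] unfolding padded_def t_def by auto
  qed
  ultimately show ?thesis
    unfolding t_def
    by (intro exI[of _ "padded \<union> simple"]) (auto simp: simple_def intro: le_trans[OF card_Un_le])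
qed

lemma dependency_cover:
  assumes U: "universal1 U" and V: "universal2 V"
  shows "\<exists>c. \<forall>n \<alpha>. \<exists>B. B \<subseteq> {x. length x = n} \<and> card B \<le> 2 ^ (\<alpha> + c + 1) \<and>
           (\<forall>y. length y = n \<longrightarrow> (\<exists>x\<in>B. dependent U V \<alpha> y x))"
proof -
  have "computable2 (prefix_machine U)"
    using U computable2_prefix_machine unfolding universal1_def by blast
  then obtain c where c: "simulates V (prefix_machine U) c"
    using V unfolding universal2_def simulates_def by blast
  have "\<exists>B. B \<subseteq> {x. length x = n} \<and> card B \<le> 2 ^ (\<alpha> + c + 1) \<and>
      (\<forall>y. length y = n \<longrightarrow> (\<exists>x\<in>B. dependent U V \<alpha> y x))" for n \<alpha>
  proof (cases "n \<le> \<alpha> + c")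
    case True
    then have "card {x :: bool list. length x = n} \<le> 2 ^ (\<alpha> + c + 1)"
      unfolding card_strings_length by (intro power_increasing) auto
    then show ?thesis
      by (intro exI[of _ "{x. length x = n}"]) (auto simp: dependent_def)
  next
    case False
    then show ?thesis
      using padded_prefix_cover[OF U c] by simp
  qed
  then show ?thesis by blast
qed

theorem theorem6:
  fixes U :: "bool list \<Rightarrow> bool list option"
    and V :: "bool list \<Rightarrow> bool list \<Rightarrow> bool list option"
  assumes "universal1 U" and "universal2 V"
  shows "\<exists>N. \<forall>n\<ge>N. \<forall>\<alpha>::nat. \<exists>B. B \<subseteq> {x. length x = n} \<and>
           card B \<le> (2 * n ^ 13 + n ^ 12) * 2 ^ \<alpha> \<and>
           (\<forall>y. length y = n \<longrightarrow> (\<exists>x\<in>B. dependent U V \<alpha> y x))"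
proof -
  obtain c where cover: "\<And>n \<alpha>. \<exists>B. B \<subseteq> {x. length x = n} \<and> card B \<le> 2 ^ (\<alpha> + c + 1) \<and>
      (\<forall>y. length y = n \<longrightarrow> (\<exists>x\<in>B. dependent U V \<alpha> y x))"
    using dependency_cover[OF assms] by blast
  have "\<exists>B. B \<subseteq> {x. length x = n} \<and> card B \<le> (2 * n ^ 13 + n ^ 12) * 2 ^ \<alpha> \<and>
      (\<forall>y. length y = n \<longrightarrow> (\<exists>x\<in>B. dependent U V \<alpha> y x))"
    if n: "2 ^ (c + 1) \<le> n" for n \<alpha> :: nat
  proof -
    have "1 \<le> n"
      using n one_le_power[of "2::nat" "c + 1"] by linarith
    then have "2 ^ (c + 1) \<le> n ^ 12"
      using n self_le_power[of n 12] by simp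
    then have "(2::nat) ^ (\<alpha> + c + 1) \<le> n ^ 12 * 2 ^ \<alpha>"
      by (simp add: power_add mult.commute)
    also have "\<dots> \<le> (2 * n ^ 13 + n ^ 12) * 2 ^ \<alpha>"
      by simp
    finally have "(2::nat) ^ (\<alpha> + c + 1) \<le> (2 * n ^ 13 + n ^ 12) * 2 ^ \<alpha>" .
    with cover[of n \<alpha>] show ?thesis
      by (auto intro: le_trans)
  qed
  then show ?thesis
    by (intro exI[of _ "2 ^ (c + 1)"]) simp
qed

end
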